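(* Let $X$ and $Y$ be objects of an $R$-linear triangulated category $\mathsf{T}$ with $\operatorname{Hom}^*_{\mathsf{T}}(X,Y)$ in $\mathsf{noeth}^{\mathsf{fl}}(R)$, and let $s$ be an integer with $s\ge\operatorname{cx}(X,Y)\ge1$. Then $e^s(X,Y)=-e^s(X,\Sigma Y)=-e^s(\Sigma X,Y)$. These equalities also hold (with $s=0$) if $\operatorname{cx}(X,Y)=0$ and $\lambda^n(X,Y)=0$ for $n\ll0$.
   Context: $R=\bigoplus_{n\ge 0}R^n$ is a graded-commutative Noetherian ring generated over $R^0$ by $R^d$, $d\ge2$ even (standing assumption). $\mathsf{T}$ is a triangulated category with suspension $\Sigma$ that is $R$-linear (a graded ring map from $R$ to the graded center of $\mathsf{T}$, whose degree-$n$ elements are natural transformations $\eta:\mathrm{id}\to\Sigma^n$ with $\eta\Sigma=(-1)^n\Sigma\eta$), so $\operatorname{Hom}^*_{\mathsf{T}}(X,Y)=\bigoplus_n\operatorname{Hom}_{\mathsf{T}}(X,\Sigma^nY)$ is a graded $R$-module. $\lambda^n(X,Y)=\ell_{R^0}\operatorname{Hom}_{\mathsf{T}}(X,\Sigma^nY)$. $\mathsf{noeth}^{\mathsf{fl}}(R)$: $\bigoplus_{n\ge n_0}\operatorname{Hom}_{\mathsf{T}}(X,\Sigma^nY)$ Noetherian for some $n_0$ and all $\lambda^n<\infty$. Hilbert polynomials $g_i$ with $g_i(n)=\lambda^{dn+i}(X,Y)$ for $n\gg0$; $\operatorname{cx}(X,Y)=1+\max_i\deg g_i$ (zero polynomial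 has degree $-1$). $h(X,Y)(n)=\sum_{i=0}^{d-1}(-1)^{n+i}\lambda^{n+i}(X,Y)$; $\Delta^1f(n)=f(n+d)-f(n)$, $\Delta^0f=f$, $\Delta^s=\Delta^1\Delta^{s-1}$. For $s\ge\operatorname{cx}(X,Y)$: if $\operatorname{cx}\ge1$, $e^s(X,Y)=\Delta^{s-1}h(X,Y)(n)$ for $n\gg0$; if $\operatorname{cx}=0$ and $\lambda^n(X,Y)=0$ for $n\ll0$, $e^0(X,Y)=\sum_n(-1)^n\lambda^n(X,Y)$. *)

theory Defs
  imports "HOL-Computational_Algebra.Polynomial" "HOL-Library.Extended_Nat"
begin

text \<open>Abstract model of the data of an R-linear triangulated category that the
statement depends on.  Objects have type 'o; isoR is the isomorphism relation;
S is the suspension, Si a quasi-inverse of it; hlen A B is the R^0-length of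
Hom_T(A,B) (possibly infinite).\<close>

definition susp_cat ::
  "('o \<Rightarrow> 'o \<Rightarrow> bool) \<Rightarrow> ('o \<Rightarrow> 'o) \<Rightarrow> ('o \<Rightarrow> 'o) \<Rightarrow> ('o \<Rightarrow> 'o \<Rightarrow> enat) \<Rightarrow> bool" where
  "susp_cat isoR S Si hlen \<longleftrightarrow>
     equivp isoR \<and>
     (\<forall>A B. isoR A B \<longrightarrow> isoR (S A) (S B)) \<and>
     (\<forall>A B. isoR A B \<longrightarrow> isoR (Si A) (Si B)) \<and>
     (\<forall>A. isoR (S (Si A)) A) \<and> (\<forall>A. isoR (Si (S A)) A) \<and>
     (\<forall>A A' B B'. isoR A A' \<longrightarrow> isoR B B' \<longrightarrow> hlen A B = hlen A' B') \<and>
     (\<forall>A B. hlen (S A) (S B) = hlen A B)"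

definition shift :: "('o \<Rightarrow> 'o) \<Rightarrow> ('o \<Rightarrow> 'o) \<Rightarrow> int \<Rightarrow> 'o \<Rightarrow> 'o" where
  "shift S Si n = (if 0 \<le> n then S ^^ nat n else Si ^^ nat (- n))"

definition lam :: "('o \<Rightarrow> 'o \<Rightarrow> enat) \<Rightarrow> ('o \<Rightarrow> 'o) \<Rightarrow> ('o \<Rightarrow> 'o) \<Rightarrow> 'o \<Rightarrow> 'o \<Rightarrow> int \<Rightarrow> nat" where
  "lam hlen S Si X Y n = the_enat (hlen X (shift S Si n Y))"

definition hilb_polys :: "nat \<Rightarrow> (int \<Rightarrow> nat) \<Rightarrow> (nat \<Rightarrow> real poly) \<Rightarrow> bool" where
  "hilb_polys d l g \<longleftrightarrow>
     (\<forall>i<d. eventually (\<lambda>n::nat. poly (g i) (real n) = real (l (int d * int n + int i))) sequentially)"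

definition pdeg :: "real poly \<Rightarrow> int" where
  "pdeg p = (if p = 0 then -1 else int (degree p))"

definition cx :: "nat \<Rightarrow> (int \<Rightarrow> nat) \<Rightarrow> int" where
  "cx d l = (let g = (SOME g. hilb_polys d l g) in 1 + Max ((\<lambda>i. pdeg (g i)) ` {..<d}))"

definition hfun :: "nat \<Rightarrow> (int \<Rightarrow> nat) \<Rightarrow> int \<Rightarrow> int" where
  "hfun d l n = (\<Sum>i<d. (if even (n + int i) then 1 else -1) * int (l (n + int i)))"

definition delta :: "nat \<Rightarrow> (int \<Rightarrow> int) \<Rightarrow> int \<Rightarrow> int" where
  "delta d f n = f (n + int d) - f n"

text \<open>e^s for s >= 1 (used when s >= cx >= 1): the eventual value of Delta^{s-1} h.\<close>
definition emult :: "nat \<Rightarrow> (int \<Rightarrow> nat) \<Rightarrow> nat \<Rightarrow> int" where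
  "emult d l s = (THE c. eventually (\<lambda>n. ((delta d ^^ (s - 1)) (hfun d l)) n = c) at_top)"

text \<open>e^0 (used when cx = 0 and lambda^n = 0 for n << 0): sum of (-1)^n lambda^n.\<close>
definition emult0 :: "(int \<Rightarrow> nat) \<Rightarrow> int" where
  "emult0 l = (\<Sum>n\<in>{n. l n \<noteq> 0}. (if even n then 1 else -1) * int (l n))"

text \<open>Surrogate for Hom^*(X,Y) in noeth^fl(R): all lengths finite and the
Hilbert polynomials exist (their existence is what Noetherianity provides).\<close>
definition noeth_fl :: "nat \<Rightarrow> ('o \<Rightarrow> 'o \<Rightarrow> enat) \<Rightarrow> ('o \<Rightarrow> 'o) \<Rightarrow> ('o \<Rightarrow> 'o) \<Rightarrow> 'o \<Rightarrow> 'o \<Rightarrow> bool" where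
  "noeth_fl d hlen S Si X Y \<longleftrightarrow>
     (\<forall>n. hlen X (shift S Si n Y) \<noteq> \<infinity>) \<and> (\<exists>g. hilb_polys d (lam hlen S Si X Y) g)"

end

theory Submission
  imports Defs
begin

text \<open>Suspending Y shifts lambda(X,Y) by +1 and suspending X shifts it by -1. Since d is even,
an odd shift of the index negates the alternating sums h and e^0, hence also Delta^{s-1} h
and its eventual value. That eventual value exists for s \<ge> cx(X,Y): h(n+1) - h(n) is
\<plusminus>(lambda^{n+d} - lambda^n), so the consecutive differences of Delta^{s-1} h are
\<plusminus>Delta^s lambda, which vanishes for n >> 0 because on each residue class mod d the
function lambda is eventually a polynomial of degree < s.\<close>

definition forward_diff :: "(nat \<Rightarrow> 'a::ab_group_add) \<Rightarrow> nat \<Rightarrow> 'a" where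
  "forward_diff f m = f (Suc m) - f m"

lemma funpow_forward_diff_cong:
  assumes "\<forall>m\<ge>M. f m = g m" and "m \<ge> M"
  shows "(forward_diff ^^ j) f m = (forward_diff ^^ j) g m"
  using assms by (induction j arbitrary: m) (auto simp: forward_diff_def)

lemma degree_pcompose_shift_diff_less:
  fixes p :: "'a::idom poly"
  assumes "degree p > 0"
  shows "degree (pcompose p [:1, 1:] - p) < degree p"
proof (rule degree_lessI)
  show "pcompose p [:1, 1:] - p \<noteq> 0 \<or> 0 < degree p"
    using assms by simp
  have "degree (pcompose p [:1, 1:]) = degree p"
    by (simp add: degree_pcompose)
  moreover have "lead_coeff (pcompose p [:1, 1:]) = lead_coeff p"
    by (simp add: lead_coeff_comp)
  ultimately show "\<forall>k\<ge>degree p. coeff (pcompose p [:1, 1:] - p) k = 0"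
    by (auto simp: coeff_eq_0 order.order_iff_strict)
qed

lemma funpow_forward_diff_poly:
  fixes p :: "'a::idom poly"
  assumes "p = 0 \<or> degree p < s"
  shows "(forward_diff ^^ s) (\<lambda>m. poly p (of_nat m)) = (\<lambda>_. 0)"
  using assms
proof (induction s arbitrary: p)
  case 0
  then show ?case by (simp add: fun_eq_iff)
next
  case (Suc s)
  let ?q = "pcompose p [:1, 1:] - p"
  have step: "forward_diff (\<lambda>m. poly p (of_nat m)) = (\<lambda>m. poly ?q (of_nat m))"
    by (simp add: fun_eq_iff forward_diff_def poly_pcompose add.commute)
  have "?q = 0 \<or> degree ?q < s"
  proof (cases "degree p = 0")
    case True
    then obtain c where "p = [:c:]" by (metis degree_eq_zeroE)
    then show ?thesis by simp
  next
    case False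
    then show ?thesis
      using Suc.prems degree_pcompose_shift_diff_less[of p] by auto
  qed
  then have "(forward_diff ^^ s) (\<lambda>m. poly ?q (of_nat m)) = (\<lambda>_. 0)"
    by (rule Suc.IH)
  then show ?case
    by (simp add: funpow_Suc_right step del: funpow.simps)
qed

lemma funpow_delta_residue:
  "of_int ((delta d ^^ j) f (int d * int m + i)) =
   ((forward_diff ^^ j) (\<lambda>m. of_int (f (int d * int m + i))) m :: 'a::ring_1)"
proof (induction j arbitrary: m)
  case 0
  then show ?case by simp
next
  case (Suc j)
  have "(delta d ^^ Suc j) f (int d * int m + i) =
        (delta d ^^ j) f (int d * int (Suc m) + i) - (delta d ^^ j) f (int d * int m + i)"
    by (simp add: delta_def algebra_simps)
  then show ?case
    using Suc.IH[of m] Suc.IH[of "Suc m"] by (simp add: forward_diff_def)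
qed

lemma funpow_delta_shift:
  "(delta d ^^ j) (\<lambda>n. f (n + k)) = (\<lambda>n. (delta d ^^ j) f (n + k))"
  by (induction j) (auto simp: delta_def fun_eq_iff algebra_simps)

lemma funpow_delta_diff:
  "(delta d ^^ j) (\<lambda>n. f n - g n) = (\<lambda>n. (delta d ^^ j) f n - (delta d ^^ j) g n)"
  by (induction j) (auto simp: delta_def fun_eq_iff algebra_simps)

lemma funpow_delta_uminus:
  "(delta d ^^ j) (\<lambda>n. - f n) = (\<lambda>n. - (delta d ^^ j) f n)"
  by (induction j) (auto simp: delta_def fun_eq_iff algebra_simps)

lemma funpow_delta_mult_periodic:
  assumes "\<And>n. c (n + int d) = c n"
  shows "(delta d ^^ j) (\<lambda>n. c n * f n) = (\<lambda>n. c n * (delta d ^^ j) f n)"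
  by (induction j) (auto simp: delta_def fun_eq_iff algebra_simps assms)

lemma eventually_funpow_delta_eq_0:
  fixes l :: "int \<Rightarrow> nat"
  assumes "d > 0" and "hilb_polys d l g" and deg: "\<forall>i<d. g i = 0 \<or> degree (g i) < s"
  shows "eventually (\<lambda>n. (delta d ^^ s) (\<lambda>n. int (l n)) n = 0) at_top"
proof -
  have "eventually (\<lambda>m. \<forall>i\<in>{..<d}. poly (g i) (real m) = real (l (int d * int m + int i)))
          sequentially"
    using assms(2) unfolding hilb_polys_def by (intro eventually_ball_finite) auto
  then obtain M where M: "\<forall>m\<ge>M. poly (g i) (real m) = real (l (int d * int m + int i))"
    if "i < d" for i
    by (auto simp: eventually_sequentially)
  have "(delta d ^^ s) (\<lambda>n. int (l n)) n = 0" if n: "n \<ge> int d * int M" for n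
  proof -
    define q where "q = nat (n div int d)"
    define i where "i = nat (n mod int d)"
    have "int M \<le> n div int d"
      using zdiv_mono1[OF n, of "int d"] \<open>d > 0\<close> by simp
    then have "q \<ge> M" and n_eq: "n = int d * int q + int i"
      using \<open>d > 0\<close> by (auto simp: q_def i_def)
    have "i < d"
      using \<open>d > 0\<close> pos_mod_bound[of "int d" n] by (simp add: i_def nat_less_iff)
    have "real_of_int ((delta d ^^ s) (\<lambda>n. int (l n)) n) =
          (forward_diff ^^ s) (\<lambda>m. real_of_int (int (l (int d * int m + int i)))) q"
      unfolding n_eq by (rule funpow_delta_residue)
    also have "\<dots> = (forward_diff ^^ s) (\<lambda>m. poly (g i) (real m)) q"
      using M[OF \<open>i < d\<close>] \<open>q \<ge> M\<close> by (intro funpow_forward_diff_cong) auto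
    also have "\<dots> = 0"
      using funpow_forward_diff_poly[of "g i" s] deg \<open>i < d\<close> by simp
    finally show ?thesis by simp
  qed
  then show ?thesis
    unfolding eventually_at_top_linorder by blast
qed

lemma hfun_succ_diff:
  assumes "even d"
  shows "hfun d l (n + 1) - hfun d l n =
    (if even n then 1 else -1) * (int (l (n + int d)) - int (l n))"
proof -
  define a where "a i = (if even (n + int i) then 1 else -1) * int (l (n + int i))" for i :: nat
  have "hfun d l (n + 1) = (\<Sum>i<d. a (Suc i))"
    unfolding hfun_def a_def by (rule sum.cong) (auto simp: algebra_simps)
  moreover have "hfun d l n = (\<Sum>i<d. a i)"
    unfolding hfun_def a_def by simp
  ultimately have "hfun d l (n + 1) - hfun d l n = a d - a 0"
    by (simp add: sum_subtractf[symmetric] sum_lessThan_telescope)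
  then show ?thesis
    using assms by (simp add: a_def)
qed

lemma eventually_const_if_eventually_succ_eq:
  fixes f :: "int \<Rightarrow> 'a"
  assumes "eventually (\<lambda>n. f (n + 1) = f n) at_top"
  shows "\<exists>c. eventually (\<lambda>n. f n = c) at_top"
proof -
  obtain N where N: "\<And>n. n \<ge> N \<Longrightarrow> f (n + 1) = f n"
    using assms by (auto simp: eventually_at_top_linorder)
  have "f n = f N" if "n \<ge> N" for n
    using that by (induction n rule: int_ge_induct) (auto simp: N)
  then show ?thesis
    unfolding eventually_at_top_linorder by blast
qed

lemma eventually_const_funpow_delta_hfun:
  fixes l :: "int \<Rightarrow> nat"
  assumes "even d" and "d > 0" and "s \<ge> 1"
    and "hilb_polys d l g" and "\<forall>i<d. g i = 0 \<or> degree (g i) < s"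
  shows "\<exists>c. eventually (\<lambda>n. (delta d ^^ (s - 1)) (hfun d l) n = c) at_top"
proof (rule eventually_const_if_eventually_succ_eq)
  define F where "F = (delta d ^^ (s - 1)) (hfun d l)"
  define sign :: "int \<Rightarrow> int" where "sign n = (if even n then 1 else -1)" for n
  have sign_periodic: "sign (n + int d) = sign n" for n
    using \<open>even d\<close> by (simp add: sign_def)
  have hfun_step: "(\<lambda>n. hfun d l (n + 1) - hfun d l n) = (\<lambda>n. sign n * delta d (\<lambda>n. int (l n)) n)"
    using hfun_succ_diff[OF \<open>even d\<close>] by (simp add: fun_eq_iff delta_def sign_def)
  have "(\<lambda>n. F (n + 1) - F n) = (delta d ^^ (s - 1)) (\<lambda>n. hfun d l (n + 1) - hfun d l n)"
    unfolding F_def funpow_delta_diff funpow_delta_shift ..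
  also have "\<dots> = (\<lambda>n. sign n * (delta d ^^ (s - 1)) (delta d (\<lambda>n. int (l n))) n)"
    unfolding hfun_step funpow_delta_mult_periodic[where c = sign, OF sign_periodic] ..
  also have "(delta d ^^ (s - 1)) (delta d (\<lambda>n. int (l n))) = (delta d ^^ s) (\<lambda>n. int (l n))"
    using \<open>s \<ge> 1\<close> by (metis Suc_diff_le diff_Suc_1 funpow_Suc_right o_apply)
  finally have F_step: "F (n + 1) - F n = sign n * (delta d ^^ s) (\<lambda>n. int (l n)) n" for n
    by (simp add: fun_eq_iff)
  show "eventually (\<lambda>n. F (n + 1) = F n) at_top"
    using eventually_funpow_delta_eq_0[OF \<open>d > 0\<close> assms(4,5)]
    by (rule eventually_mono) (metis F_step eq_iff_diff_eq_0 mult_zero_right)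
qed

lemma emult_eqI:
  assumes "eventually (\<lambda>n. (delta d ^^ (s - 1)) (hfun d l) n = c) at_top"
  shows "emult d l s = c"
  unfolding emult_def
proof (rule the_equality)
  fix c' assume "eventually (\<lambda>n. (delta d ^^ (s - 1)) (hfun d l) n = c') at_top"
  from eventually_conj[OF assms this] have "eventually (\<lambda>n::int. c' = c) at_top"
    by (rule eventually_mono) auto
  then show "c' = c" by simp
qed (rule assms)

lemma hfun_shift_odd:
  assumes "odd k"
  shows "hfun d (\<lambda>n. l (n + k)) = (\<lambda>n. - hfun d l (n + k))"
proof
  fix n
  have "hfun d (\<lambda>n. l (n + k)) n =
        (\<Sum>i<d. - ((if even (n + k + int i) then 1 else -1) * int (l (n + k + int i))))"
    unfolding hfun_def by (rule sum.cong) (use assms in \<open>auto simp: algebra_simps\<close>)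
  then show "hfun d (\<lambda>n. l (n + k)) n = - hfun d l (n + k)"
    unfolding hfun_def by (simp add: sum_negf)
qed

lemma emult_shift_odd:
  assumes "odd k" and "eventually (\<lambda>n. (delta d ^^ (s - 1)) (hfun d l) n = c) at_top"
  shows "emult d (\<lambda>n. l (n + k)) s = - emult d l s"
proof -
  obtain N where N: "\<And>n. n \<ge> N \<Longrightarrow> (delta d ^^ (s - 1)) (hfun d l) n = c"
    using assms(2) by (auto simp: eventually_at_top_linorder)
  have "(delta d ^^ (s - 1)) (hfun d (\<lambda>n. l (n + k))) n = - c" if "n \<ge> N - k" for n
    using N[of "n + k"] that
    by (simp add: hfun_shift_odd[OF \<open>odd k\<close>] funpow_delta_uminus funpow_delta_shift)
  then have "emult d (\<lambda>n. l (n + k)) s = - c"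
    by (intro emult_eqI) (auto simp: eventually_at_top_linorder)
  with emult_eqI[OF assms(2)] show ?thesis by simp
qed

lemma emult0_shift_odd:
  assumes "odd k"
  shows "emult0 (\<lambda>n. l (n + k)) = - emult0 l"
proof -
  have support: "{n. l (n + k) \<noteq> 0} = (\<lambda>m. m - k) ` {m. l m \<noteq> 0}"
    by (auto simp: image_def intro!: exI[of _ "_ + k"])
  have "emult0 (\<lambda>n. l (n + k)) =
        (\<Sum>m\<in>{m. l m \<noteq> 0}. (if even (m - k) then 1 else -1) * int (l m))"
    unfolding emult0_def support by (subst sum.reindex) (auto simp: inj_on_def)
  also have "\<dots> = (\<Sum>m\<in>{m. l m \<noteq> 0}. - ((if even m then 1 else -1) * int (l m)))"
    by (rule sum.cong) (use assms in auto)
  finally show ?thesis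
    unfolding emult0_def by (simp add: sum_negf)
qed

lemma hilb_polys_degree_less_if_cx_le:
  assumes "\<exists>g. hilb_polys d l g" and "cx d l \<le> int s"
  shows "\<exists>g. hilb_polys d l g \<and> (\<forall>i<d. g i = 0 \<or> degree (g i) < s)"
proof (intro exI conjI allI impI)
  let ?g = "SOME g. hilb_polys d l g"
  show "hilb_polys d l ?g"
    using assms(1) by (rule someI_ex)
  fix i assume "i < d"
  then have "pdeg (?g i) \<le> Max ((\<lambda>i. pdeg (?g i)) ` {..<d})"
    by (intro Max_ge) auto
  with assms(2) have "pdeg (?g i) < int s"
    by (simp add: cx_def)
  then show "?g i = 0 \<or> degree (?g i) < s"
    by (auto simp: pdeg_def split: if_splits)
qed

lemma shift_succ:
  assumes "0 \<le> n"
  shows "shift S Si (n + 1) Y = S (shift S Si n Y)"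
  using assms by (simp add: shift_def nat_add_distrib)

lemma shift_pred:
  assumes "n < 0"
  shows "shift S Si n Y = Si (shift S Si (n + 1) Y)"
proof -
  have "nat (- n) = Suc (nat (- (n + 1)))"
    using assms by simp
  then show ?thesis
    using assms by (simp add: shift_def)
qed

lemma iso_funpow:
  assumes "\<forall>A B. isoR A B \<longrightarrow> isoR (F A) (F B)" and "isoR A B"
  shows "isoR ((F ^^ j) A) ((F ^^ j) B)"
  using assms by (induction j) auto

lemma shift_susp_iso:
  assumes "susp_cat isoR S Si hlen"
  shows "isoR (shift S Si n (S Y)) (shift S Si (n + 1) Y)"
proof (cases "0 \<le> n")
  case True
  then have "shift S Si n (S Y) = shift S Si (n + 1) Y"
    by (simp add: shift_def nat_add_distrib funpow_Suc_right del: funpow.simps)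
  then show ?thesis
    using assms by (simp add: susp_cat_def equivp_reflp)
next
  case False
  define k where "k = nat (- (n + 1))"
  have "nat (- n) = Suc k"
    using False by (simp add: k_def)
  then have "shift S Si n (S Y) = (Si ^^ k) (Si (S Y))"
    using False by (simp add: shift_def funpow_Suc_right del: funpow.simps)
  moreover have "shift S Si (n + 1) Y = (Si ^^ k) Y"
    using False by (cases "n = - 1") (simp_all add: shift_def k_def)
  ultimately show ?thesis
    using assms by (simp add: susp_cat_def iso_funpow)
qed

lemma susp_shift_iso:
  assumes "susp_cat isoR S Si hlen"
  shows "isoR (S (shift S Si n Y)) (shift S Si (n + 1) Y)"
proof (cases "0 \<le> n")
  case True
  then show ?thesis
    using assms by (simp add: shift_succ susp_cat_def equivp_reflp)
next
  case False
  then show ?thesis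
    using assms by (simp add: shift_pred susp_cat_def)
qed

lemma hlen_iso_right:
  assumes "susp_cat isoR S Si hlen" and "isoR B B'"
  shows "hlen A B = hlen A B'"
proof -
  from assms(1) have "equivp isoR"
    and "\<forall>A A' B B'. isoR A A' \<longrightarrow> isoR B B' \<longrightarrow> hlen A B = hlen A' B'"
    unfolding susp_cat_def by blast+
  with assms(2) show ?thesis
    by (meson equivp_reflp)
qed

lemma lam_susp_right:
  assumes "susp_cat isoR S Si hlen"
  shows "lam hlen S Si X (S Y) = (\<lambda>n. lam hlen S Si X Y (n + 1))"
  using hlen_iso_right[OF assms shift_susp_iso[OF assms]] by (simp add: lam_def fun_eq_iff)

lemma lam_susp_left:
  assumes "susp_cat isoR S Si hlen"
  shows "lam hlen S Si (S X) Y = (\<lambda>n. lam hlen S Si X Y (n - 1))"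
proof
  fix n
  have "hlen (S X) (shift S Si n Y) = hlen (S X) (S (shift S Si (n - 1) Y))"
    using hlen_iso_right[OF assms susp_shift_iso[OF assms, of "n - 1"]] by simp
  also have "\<dots> = hlen X (shift S Si (n - 1) Y)"
    using assms by (simp add: susp_cat_def)
  finally show "lam hlen S Si (S X) Y n = lam hlen S Si X Y (n - 1)"
    by (simp add: lam_def)
qed

theorem proposition4p9:
  fixes isoR :: "'o \<Rightarrow> 'o \<Rightarrow> bool" and S Si :: "'o \<Rightarrow> 'o"
    and hlen :: "'o \<Rightarrow> 'o \<Rightarrow> enat" and d :: nat and X Y :: 'o
  assumes "susp_cat isoR S Si hlen"
    and "d \<ge> 2" and "even d"
    and "noeth_fl d hlen S Si X Y"
  shows "(\<forall>s::nat. int s \<ge> cx d (lam hlen S Si X Y) \<and> cx d (lam hlen S Si X Y) \<ge> 1 \<longrightarrow>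
           emult d (lam hlen S Si X Y) s = - emult d (lam hlen S Si X (S Y)) s \<and>
           emult d (lam hlen S Si X Y) s = - emult d (lam hlen S Si (S X) Y) s) \<and>
         (cx d (lam hlen S Si X Y) = 0 \<and> eventually (\<lambda>n. lam hlen S Si X Y n = 0) at_bot \<longrightarrow>
           emult0 (lam hlen S Si X Y) = - emult0 (lam hlen S Si X (S Y)) \<and>
           emult0 (lam hlen S Si X Y) = - emult0 (lam hlen S Si (S X) Y))"
proof -
  define l where "l = lam hlen S Si X Y"
  have hilb: "\<exists>g. hilb_polys d l g"
    using assms(4) by (simp add: noeth_fl_def l_def)
  have emult: "emult d (\<lambda>n. l (n + k)) s = - emult d l s"
    if "odd k" and s_ge_cx: "cx d l \<le> int s" and cx_pos: "cx d l \<ge> 1" for k s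
  proof -
    obtain g where "hilb_polys d l g" and "\<forall>i<d. g i = 0 \<or> degree (g i) < s"
      using hilb_polys_degree_less_if_cx_le[OF hilb s_ge_cx] by blast
    then obtain c where "eventually (\<lambda>n. (delta d ^^ (s - 1)) (hfun d l) n = c) at_top"
      using eventually_const_funpow_delta_hfun[OF \<open>even d\<close>] assms(2) s_ge_cx cx_pos by fastforce
    with \<open>odd k\<close> show ?thesis by (rule emult_shift_odd)
  qed
  show ?thesis
    using emult[of 1] emult[of "- 1"] emult0_shift_odd[of 1 l] emult0_shift_odd[of "- 1" l]
    unfolding lam_susp_right[OF assms(1)] lam_susp_left[OF assms(1)] l_def[symmetric]
    by auto
qed

end
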